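(* Let $k\le l$ be positive integers with $\gcd(k,l)=1$, let $n\ge1$ and $m\ge 0$ be integers, and write $m=qn+r$ with integers $q\ge 0$, $0\le r<n$. If $r\ge \frac{n}{q+2}$, then $$L^{k,l}(m,n)=nkq+\min\bigl(nk,\ r(k+l)\bigr).$$
   Context: $\mathcal D^{k,l}(m,n)$ denotes the set of all $nk\times nl$ matrices with nonnegative integer entries all of whose row sums equal $ml$ and all of whose column sums equal $mk$. For an $s\times t$ matrix $A=(a_{ij})$ with $s\le t$, a transversal of $A$ is a set of entries $T=\{a_{1i_1},\dots,a_{si_s}\}$ with $i_1,\dots,i_s\in\{1,\dots,t\}$ pairwise distinct, and $|T|=a_{1i_1}+\cdots+a_{si_s}$; if $s>t$, the transversals of $A$ are those of its transpose. The tropical determinant is ${\rm tdet}(A)=\max_T|T|$, and $L^{k,l}(m,n)=\min_{A\in\mathcal D^{k,l}(m,n)}{\rm tdet}(A)$. *)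

theory Defs
  imports Main
begin

(* An s x t matrix with nonnegative integer entries is represented by
   A :: nat => nat => nat, with rows indexed by {0..<s} and columns by {0..<t}. *)

definition transversal_sums :: "nat \<Rightarrow> nat \<Rightarrow> (nat \<Rightarrow> nat \<Rightarrow> nat) \<Rightarrow> nat set" where
  "transversal_sums s t A =
     (if s \<le> t then
        {(\<Sum>i<s. A i (f i)) | f. inj_on f {..<s} \<and> f ` {..<s} \<subseteq> {..<t}}
      else
        {(\<Sum>j<t. A (g j) j) | g. inj_on g {..<t} \<and> g ` {..<t} \<subseteq> {..<s}})"

definition tdet :: "nat \<Rightarrow> nat \<Rightarrow> (nat \<Rightarrow> nat \<Rightarrow> nat) \<Rightarrow> nat" where
  "tdet s t A = Max (transversal_sums s t A)"

definition Dkl :: "nat \<Rightarrow> nat \<Rightarrow> nat \<Rightarrow> nat \<Rightarrow> (nat \<Rightarrow> nat \<Rightarrow> nat) set" where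
  "Dkl k l m n =
     {A. (\<forall>i j. (i \<ge> n*k \<or> j \<ge> n*l) \<longrightarrow> A i j = 0)
       \<and> (\<forall>i<n*k. (\<Sum>j<n*l. A i j) = m*l)
       \<and> (\<forall>j<n*l. (\<Sum>i<n*k. A i j) = m*k)}"

definition Lkl :: "nat \<Rightarrow> nat \<Rightarrow> nat \<Rightarrow> nat \<Rightarrow> nat" where
  "Lkl k l m n = Min (tdet (n*k) (n*l) ` Dkl k l m n)"

end

theory Submission
  imports Defs
begin

text \<open>Lower bound: after padding with zero rows, Egervary's theorem (LP duality for the
  assignment problem, a consequence of Hall's theorem) provides potentials \<open>u, v \<ge> 0\<close> with
  \<open>A i j \<le> u i + v j\<close>, some \<open>v j\<^sub>0 = 0\<close>, and \<open>\<Sum>u + \<Sum>v \<le> tdet A\<close>. Column \<open>j\<^sub>0\<close> gives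
  \<open>\<Sum>u \<ge> mk\<close>. Either every \<open>u i \<ge> q + 1\<close>, so \<open>\<Sum>u \<ge> nk(q + 1)\<close>, or some \<open>u i \<le> q\<close>, and then
  the row sum \<open>ml = nlq + rl\<close> of row \<open>i\<close> forces \<open>\<Sum>v \<ge> rl\<close>. Hence
  \<open>tdet A \<ge> min (nk(q + 1)) (mk + rl) = nkq + min (nk) (r(k + l))\<close>.

  Upper bound: if \<open>nk \<le> r(k + l)\<close>, add to the constant matrix \<open>q\<close> a block circulant 0/1 matrix
  with \<open>r\<close> blocks of ones in each block row and column; all entries are at most \<open>q + 1\<close>.
  Otherwise put \<open>q + 1\<close> into the two off-diagonal corners of an \<open>(rk + (n - r)k) \<times> (rl + (n - r)l)\<close>
  block decomposition, \<open>q\<close> into the lower right corner, and spread the remaining mass evenly over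
  the upper left corner. The hypothesis \<open>n \<le> r(q + 2)\<close> keeps its entries between 0 and
  \<open>q + 2\<close>, so the potentials \<open>u = q + 1, q\<close> and \<open>v = 1, 0\<close> on the two parts bound \<open>tdet\<close> by
  \<open>nkq + r(k + l)\<close>.\<close>

section \<open>Hall's marriage theorem\<close>

lemma marriage_condition_Diff_critical:
  fixes N :: "'a \<Rightarrow> 'b set"
  assumes "finite I" "\<And>i. i \<in> I \<Longrightarrow> finite (N i)"
    and marriage: "\<And>S. S \<subseteq> I \<Longrightarrow> card S \<le> card (\<Union>(N ` S))"
    and "S \<subseteq> I" "card (\<Union>(N ` S)) \<le> card S" "T \<subseteq> I - S"
  shows "card T \<le> card (\<Union>i\<in>T. N i - \<Union>(N ` S))"
proof -
  have "finite S" "finite T" using assms(1,4,6) finite_subset by blast+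
  then have fin: "finite S" "finite T" "finite (\<Union>(N ` S))" using assms(2,4) by auto
  have "T \<inter> S = {}" using assms(6) by blast
  then have "card T + card S = card (T \<union> S)" using fin by (simp add: card_Un_disjoint)
  also have "\<dots> \<le> card (\<Union>(N ` (T \<union> S)))"
    using assms(4,6) by (intro marriage) auto
  also have "\<Union>(N ` (T \<union> S)) = (\<Union>i\<in>T. N i - \<Union>(N ` S)) \<union> \<Union>(N ` S)" by auto
  also have "card \<dots> \<le> card (\<Union>i\<in>T. N i - \<Union>(N ` S)) + card (\<Union>(N ` S))"
    by (rule card_Un_le)
  finally show ?thesis using assms(5) by linarith
qed

lemma marriage_condition_remove:
  fixes N :: "'a \<Rightarrow> 'b set"
  assumes "finite I" "\<And>i. i \<in> I \<Longrightarrow> finite (N i)"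
    and surplus: "\<And>S. S \<subseteq> I \<Longrightarrow> S \<noteq> {} \<Longrightarrow> S \<noteq> I \<Longrightarrow> card S < card (\<Union>(N ` S))"
    and "i0 \<in> I" "T \<subseteq> I - {i0}"
  shows "card T \<le> card (\<Union>i\<in>T. N i - {j0})"
proof (cases "T = {}")
  case False
  have "finite T" using assms(1,5) finite_subset by blast
  then have "finite (\<Union>(N ` T))" using assms(2,5) by auto
  moreover have "card T < card (\<Union>(N ` T))" using False assms(4,5) by (intro surplus) auto
  moreover have "(\<Union>i\<in>T. N i - {j0}) = \<Union>(N ` T) - {j0}" by auto
  ultimately show ?thesis by (auto simp: card_Diff_singleton_if)
qed simp

theorem marriage_theorem:
  fixes N :: "'a \<Rightarrow> 'b set"
  assumes "finite I" "\<And>i. i \<in> I \<Longrightarrow> finite (N i)"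
    and "\<And>S. S \<subseteq> I \<Longrightarrow> card S \<le> card (\<Union>(N ` S))"
  shows "\<exists>f. inj_on f I \<and> (\<forall>i\<in>I. f i \<in> N i)"
  using assms
proof (induction "card I" arbitrary: I N rule: less_induct)
  case less
  note fin = less.prems(1,2) and marriage = less.prems(3)
  show ?case
  proof (cases "\<exists>S. S \<subseteq> I \<and> S \<noteq> {} \<and> S \<noteq> I \<and> card (\<Union>(N ` S)) \<le> card S")
    case True
    then obtain S where S: "S \<subseteq> I" "S \<noteq> {}" "S \<noteq> I" "card (\<Union>(N ` S)) \<le> card S"
      by blast
    have "finite S" using S(1) fin(1) by (rule finite_subset)
    have "card S < card I" using S fin(1) by (intro psubset_card_mono) auto
    have "card (I - S) < card I" using S fin(1) by (intro psubset_card_mono) auto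
    have "\<exists>f. inj_on f S \<and> (\<forall>i\<in>S. f i \<in> N i)"
      using \<open>card S < card I\<close> \<open>finite S\<close>
    proof (rule less.hyps)
      show "finite (N i)" if "i \<in> S" for i using that S(1) fin(2) by blast
      show "card T \<le> card (\<Union>(N ` T))" if "T \<subseteq> S" for T using that S(1) by (intro marriage) blast
    qed
    then obtain f1 where f1: "inj_on f1 S" "\<And>i. i \<in> S \<Longrightarrow> f1 i \<in> N i" by blast
    have "\<exists>f. inj_on f (I - S) \<and> (\<forall>i\<in>I - S. f i \<in> N i - \<Union>(N ` S))"
      using \<open>card (I - S) < card I\<close>
    proof (rule less.hyps)
      show "finite (I - S)" using fin(1) by blast
      show "finite (N i - \<Union>(N ` S))" if "i \<in> I - S" for i using that fin(2) by blast
      show "card T \<le> card (\<Union>i\<in>T. N i - \<Union>(N ` S))" if "T \<subseteq> I - S" for T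
        using marriage_condition_Diff_critical[OF fin marriage S(1,4) that] .
    qed
    then obtain f2 where f2: "inj_on f2 (I - S)" "\<And>i. i \<in> I - S \<Longrightarrow> f2 i \<in> N i - \<Union>(N ` S)"
      by blast
    have "f1 i \<noteq> f2 j" if "i \<in> S" "j \<in> I - S" for i j
    proof -
      have "f1 i \<in> \<Union>(N ` S)" using f1(2) that(1) by blast
      then show ?thesis using f2(2)[OF that(2)] by auto
    qed
    then have "f1 ` S \<inter> f2 ` (I - S) = {}" by blast
    then have "inj_on (\<lambda>i. if i \<in> S then f1 i else f2 i) (S \<union> (I - S))"
      using f1(1) f2(1) by (intro inj_on_disjoint_Un)
    then show ?thesis using S(1) f1(2) f2(2)
      by (intro exI[of _ "\<lambda>i. if i \<in> S then f1 i else f2 i"]) (auto simp: Un_absorb1)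
  next
    case False
    show ?thesis
    proof (cases "I = {}")
      case False
      then obtain i0 where "i0 \<in> I" by blast
      then have "N i0 \<noteq> {}" using marriage[of "{i0}"] by auto
      then obtain j0 where "j0 \<in> N i0" by blast
      have surplus: "card S < card (\<Union>(N ` S))" if "S \<subseteq> I" "S \<noteq> {}" "S \<noteq> I" for S
        using \<open>\<not> (\<exists>S. _)\<close> that by (meson not_le)
      have "\<exists>f. inj_on f (I - {i0}) \<and> (\<forall>i\<in>I - {i0}. f i \<in> N i - {j0})"
      proof (rule less.hyps)
        show "card (I - {i0}) < card I" using fin(1) \<open>i0 \<in> I\<close> by (rule card_Diff1_less)
        show "finite (I - {i0})" using fin(1) by blast
        show "finite (N i - {j0})" if "i \<in> I - {i0}" for i using that fin(2) by blast
        show "card T \<le> card (\<Union>i\<in>T. N i - {j0})" if "T \<subseteq> I - {i0}" for T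
          using marriage_condition_remove[OF fin surplus \<open>i0 \<in> I\<close> that] .
      qed
      then obtain f' where f': "inj_on f' (I - {i0})" "\<And>i. i \<in> I - {i0} \<Longrightarrow> f' i \<in> N i - {j0}"
        by blast
      define f where "f = f'(i0 := j0)"
      have "inj_on f (I - {i0})" using f'(1) by (simp add: f_def inj_on_def)
      moreover have "f i0 \<notin> f ` (I - {i0} - {i0})" using f'(2) by (auto simp: f_def)
      ultimately have "inj_on f (insert i0 (I - {i0}))" unfolding inj_on_insert by blast
      then show ?thesis using \<open>i0 \<in> I\<close> \<open>j0 \<in> N i0\<close> f'(2)
        by (intro exI[of _ f]) (auto simp: f_def insert_absorb)
    qed simp
  qed
qed

section \<open>Egervary's theorem\<close>

definition covers :: "nat \<Rightarrow> (nat \<Rightarrow> nat \<Rightarrow> nat) \<Rightarrow> (nat \<Rightarrow> int) \<Rightarrow> (nat \<Rightarrow> int) \<Rightarrow> bool" where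
  "covers t W u v \<longleftrightarrow> (\<forall>i<t. \<forall>j<t. int (W i j) \<le> u i + v j)"

definition tight_cols :: "nat \<Rightarrow> (nat \<Rightarrow> nat \<Rightarrow> nat) \<Rightarrow> (nat \<Rightarrow> int) \<Rightarrow> (nat \<Rightarrow> int) \<Rightarrow> nat \<Rightarrow> nat set"
  where "tight_cols t W u v i = {j. j < t \<and> int (W i j) = u i + v j}"

lemma covers_sum_nonneg:
  assumes "covers t W u v"
  shows "0 \<le> (\<Sum>i<t. u i) + (\<Sum>j<t. v j)"
proof -
  have "0 \<le> (\<Sum>i<t. int (W i i))" by (intro sum_nonneg) auto
  also have "\<dots> \<le> (\<Sum>i<t. u i + v i)" using assms unfolding covers_def by (intro sum_mono) auto
  finally show ?thesis by (simp add: sum.distrib)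
qed

lemma covers_shift_down:
  assumes "covers t W u v" "S \<subseteq> {..<t}"
  defines "NS \<equiv> \<Union>(tight_cols t W u v ` S)"
  defines "u' \<equiv> \<lambda>i. if i \<in> S then u i - 1 else u i"
    and "v' \<equiv> \<lambda>j. if j \<in> NS then v j + 1 else v j"
  shows "covers t W u' v'"
    and "(\<Sum>i<t. u' i) + (\<Sum>j<t. v' j) = (\<Sum>i<t. u i) + (\<Sum>j<t. v j) - int (card S) + int (card NS)"
proof -
  show "covers t W u' v'" unfolding covers_def
  proof (intro allI impI)
    fix i j assume ij: "i < t" "j < t"
    have "int (W i j) \<le> u i + v j" using assms(1) ij unfolding covers_def by auto
    moreover have "int (W i j) \<noteq> u i + v j" if "i \<in> S" "j \<notin> NS"
      using that ij unfolding NS_def tight_cols_def by auto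
    ultimately show "int (W i j) \<le> u' i + v' j" unfolding u'_def v'_def by auto
  qed
  have "NS \<subseteq> {..<t}" unfolding NS_def tight_cols_def by auto
  have "(\<Sum>i<t. u' i) = (\<Sum>i<t. u i) - (\<Sum>i<t. if i \<in> S then 1 else 0)"
    unfolding u'_def by (simp add: sum_subtractf[symmetric] if_distrib cong: if_cong)
  also have "(\<Sum>i<t. if i \<in> S then 1 else 0 :: int) = int (card S)"
    using assms(2) by (simp add: sum.If_cases Int_absorb1)
  finally have "(\<Sum>i<t. u' i) = (\<Sum>i<t. u i) - int (card S)" .
  moreover have "(\<Sum>j<t. v' j) = (\<Sum>j<t. v j) + (\<Sum>j<t. if j \<in> NS then 1 else 0)"
    unfolding v'_def by (simp add: sum.distrib[symmetric] if_distrib cong: if_cong)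
  moreover have "(\<Sum>j<t. if j \<in> NS then 1 else 0 :: int) = int (card NS)"
    using \<open>NS \<subseteq> {..<t}\<close> by (simp add: sum.If_cases Int_absorb1)
  ultimately show "(\<Sum>i<t. u' i) + (\<Sum>j<t. v' j) = (\<Sum>i<t. u i) + (\<Sum>j<t. v j) - int (card S) + int (card NS)"
    by simp
qed

lemma minimal_cover_marriage_condition:
  assumes "covers t W u v" "S \<subseteq> {..<t}"
    and minimal: "\<And>u' v'. covers t W u' v' \<Longrightarrow>
      (\<Sum>i<t. u i) + (\<Sum>j<t. v j) \<le> (\<Sum>i<t. u' i) + (\<Sum>j<t. v' j)"
  shows "card S \<le> card (\<Union>(tight_cols t W u v ` S))"
  using minimal[OF covers_shift_down(1)[OF assms(1,2)]] covers_shift_down(2)[OF assms(1,2)] by linarith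

theorem egervary_assignment:
  fixes W :: "nat \<Rightarrow> nat \<Rightarrow> nat"
  obtains \<sigma> u v where "inj_on \<sigma> {..<t}" "\<sigma> ` {..<t} = {..<t}" "covers t W u v"
    "int (\<Sum>i<t. W i (\<sigma> i)) = (\<Sum>i<t. u i) + (\<Sum>j<t. v j)"
proof -
  define cost where "cost = (\<lambda>(u, v). nat ((\<Sum>i<t. u i) + (\<Sum>j<t. v j :: int)))"
  have "covers t W (\<lambda>i. int (\<Sum>j<t. W i j)) (\<lambda>_. 0)"
    unfolding covers_def by (auto intro!: member_le_sum)
  then obtain u v where cover: "covers t W u v"
    and least: "\<And>u' v'. covers t W u' v' \<Longrightarrow> cost (u, v) \<le> cost (u', v')"
    using ex_has_least_nat[of "\<lambda>(u, v). covers t W u v" "(_, _)" cost] by fastforce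
  have minimal: "(\<Sum>i<t. u i) + (\<Sum>j<t. v j) \<le> (\<Sum>i<t. u' i) + (\<Sum>j<t. v' j)"
    if "covers t W u' v'" for u' v'
    using least[OF that] covers_sum_nonneg[OF that] covers_sum_nonneg[OF cover]
    unfolding cost_def by simp
  obtain \<sigma> where \<sigma>: "inj_on \<sigma> {..<t}" "\<And>i. i < t \<Longrightarrow> \<sigma> i \<in> tight_cols t W u v i"
    using marriage_theorem[of "{..<t}" "tight_cols t W u v"]
      minimal_cover_marriage_condition[OF cover _ minimal]
    by (auto simp: tight_cols_def)
  have "\<sigma> ` {..<t} \<subseteq> {..<t}" using \<sigma>(2) by (auto simp: tight_cols_def)
  then have onto: "\<sigma> ` {..<t} = {..<t}" using \<sigma>(1) by (intro endo_inj_surj) auto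
  have "int (\<Sum>i<t. W i (\<sigma> i)) = (\<Sum>i<t. u i + v (\<sigma> i))"
    unfolding of_nat_sum using \<sigma>(2) by (intro sum.cong) (auto simp: tight_cols_def)
  also have "\<dots> = (\<Sum>i<t. u i) + (\<Sum>j\<in>\<sigma> ` {..<t}. v j)"
    by (simp add: sum.distrib sum.reindex[OF \<sigma>(1)])
  finally show ?thesis using that \<sigma>(1) onto cover by simp
qed

section \<open>Tropical determinants\<close>

lemma transversal_sums_le_total:
  assumes "s \<le> t" "x \<in> transversal_sums s t A"
  shows "x \<le> (\<Sum>i<s. \<Sum>j<t. A i j)"
proof -
  from assms obtain f where "x = (\<Sum>i<s. A i (f i))" "f ` {..<s} \<subseteq> {..<t}"
    unfolding transversal_sums_def by auto
  then show ?thesis by (auto intro!: sum_mono member_le_sum)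
qed

lemma finite_transversal_sums: "s \<le> t \<Longrightarrow> finite (transversal_sums s t A)"
  by (rule finite_subset[of _ "{..(\<Sum>i<s. \<Sum>j<t. A i j)}"]) (auto dest: transversal_sums_le_total)

lemma transversal_sumsI:
  assumes "s \<le> t" "inj_on f {..<s}" "f ` {..<s} \<subseteq> {..<t}"
  shows "(\<Sum>i<s. A i (f i)) \<in> transversal_sums s t A"
  using assms unfolding transversal_sums_def by auto

lemma tdet_geI:
  assumes "s \<le> t" "inj_on f {..<s}" "f ` {..<s} \<subseteq> {..<t}"
  shows "(\<Sum>i<s. A i (f i)) \<le> tdet s t A"
  unfolding tdet_def using finite_transversal_sums[OF assms(1)] transversal_sumsI[OF assms]
  by (rule Max_ge)

lemma tdet_leI:
  assumes "s \<le> t"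
    and "\<And>f. inj_on f {..<s} \<Longrightarrow> f ` {..<s} \<subseteq> {..<t} \<Longrightarrow> (\<Sum>i<s. A i (f i)) \<le> X"
  shows "tdet s t A \<le> X"
proof -
  have "transversal_sums s t A \<noteq> {}" using assms(1) transversal_sumsI[of s t id A] by auto
  then show ?thesis
    unfolding tdet_def using finite_transversal_sums[OF assms(1)] assms(2)
    by (subst Max_le_iff) (auto simp: transversal_sums_def assms(1))
qed

lemma tdet_le_cover_sum:
  fixes u v :: "nat \<Rightarrow> nat"
  assumes "s \<le> t" "\<And>i j. i < s \<Longrightarrow> j < t \<Longrightarrow> A i j \<le> u i + v j"
  shows "tdet s t A \<le> (\<Sum>i<s. u i) + (\<Sum>j<t. v j)"
proof (rule tdet_leI[OF assms(1)])
  fix f assume f: "inj_on f {..<s}" "f ` {..<s} \<subseteq> {..<t}"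
  have "(\<Sum>i<s. A i (f i)) \<le> (\<Sum>i<s. u i + v (f i))" using f(2) assms(2) by (intro sum_mono) auto
  also have "\<dots> = (\<Sum>i<s. u i) + (\<Sum>j\<in>f ` {..<s}. v j)"
    by (simp add: sum.distrib sum.reindex[OF f(1)])
  also have "(\<Sum>j\<in>f ` {..<s}. v j) \<le> (\<Sum>j<t. v j)" using f(2) by (intro sum_mono2) auto
  finally show "(\<Sum>i<s. A i (f i)) \<le> (\<Sum>i<s. u i) + (\<Sum>j<t. v j)" by simp
qed

text \<open>Pad \<open>A\<close> with zero rows to a square matrix and take an optimal cover; shifting the
  least column potential over to the row potentials makes all potentials nonnegative.\<close>
lemma tdet_ge_normalized_cover:
  fixes A :: "nat \<Rightarrow> nat \<Rightarrow> nat"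
  assumes "s \<le> t" "0 < t"
  shows "\<exists>u v :: nat \<Rightarrow> nat. \<exists>j0<t. v j0 = 0 \<and> (\<forall>i<s. \<forall>j<t. A i j \<le> u i + v j)
    \<and> (\<Sum>i<s. u i) + (\<Sum>j<t. v j) \<le> tdet s t A"
proof -
  define W where "W i j = (if i < s then A i j else 0)" for i j
  obtain \<sigma> u v where \<sigma>: "inj_on \<sigma> {..<t}" "\<sigma> ` {..<t} = {..<t}"
    and cover: "covers t W u v" and weight: "int (\<Sum>i<t. W i (\<sigma> i)) = (\<Sum>i<t. u i) + (\<Sum>j<t. v j)"
    by (rule egervary_assignment)
  define c where "c = Min (v ` {..<t})"
  have "c \<in> v ` {..<t}" unfolding c_def using assms(2) by (intro Min_in) auto
  then obtain j0 where j0: "j0 < t" "v j0 = c" by auto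
  have c_le: "c \<le> v j" if "j < t" for j unfolding c_def using that by (intro Min_le) auto
  have u_ge: "0 \<le> u i + c" if "i < t" for i
    using cover that j0 unfolding covers_def by (metis of_nat_0_le_iff order_trans)
  define u' where "u' i = nat (u i + c)" for i
  define v' where "v' j = nat (v j - c)" for j
  have u': "int (u' i) = u i + c" if "i < t" for i using u_ge[OF that] unfolding u'_def by simp
  have v': "int (v' j) = v j - c" if "j < t" for j using c_le[OF that] unfolding v'_def by simp
  have "j0 < t" "v' j0 = 0" using j0 unfolding v'_def by auto
  moreover have "A i j \<le> u' i + v' j" if "i < s" "j < t" for i j
  proof -
    have "i < t" using that assms(1) by simp
    then have "int (A i j) \<le> u i + v j" using cover that unfolding covers_def W_def by auto
    then show ?thesis using u'[of i] v'[of j] that assms(1) by simp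
  qed
  moreover have "(\<Sum>i<s. u' i) + (\<Sum>j<t. v' j) \<le> tdet s t A"
  proof -
    have "int ((\<Sum>i<s. u' i) + (\<Sum>j<t. v' j)) \<le> int ((\<Sum>i<t. u' i) + (\<Sum>j<t. v' j))"
      using assms(1) by (simp add: sum_mono2)
    also have "\<dots> = (\<Sum>i<t. u i + c) + (\<Sum>j<t. v j - c)" by (simp add: u' v')
    also have "\<dots> = (\<Sum>i<t. u i) + (\<Sum>j<t. v j)" by (simp add: sum.distrib sum_subtractf)
    also have "\<dots> = int (\<Sum>i<t. W i (\<sigma> i))" by (rule weight[symmetric])
    also have "(\<Sum>i<t. W i (\<sigma> i)) = (\<Sum>i<s. A i (\<sigma> i))"
      using assms(1) by (intro sum.mono_neutral_cong_right) (auto simp: W_def)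
    also have "\<dots> \<le> tdet s t A"
      using assms(1) \<sigma> by (intro tdet_geI) (auto dest: inj_on_subset)
    finally show ?thesis by (simp only: of_nat_le_iff)
  qed
  ultimately show ?thesis by blast
qed

lemma tdet_Dkl_lower_bound:
  assumes "A \<in> Dkl k l m n" "k \<le> l" "0 < k" "0 < n" "m = q*n + r"
  shows "min (n*k*(q+1)) (m*k + r*l) \<le> tdet (n*k) (n*l) A"
proof -
  have rows: "(\<Sum>j<n*l. A i j) = m*l" if "i < n*k" for i using assms(1) that by (simp add: Dkl_def)
  have cols: "(\<Sum>i<n*k. A i j) = m*k" if "j < n*l" for j using assms(1) that by (simp add: Dkl_def)
  have "n*k \<le> n*l" "0 < n*l" using assms(2-4) by auto
  then obtain u v j0 where j0: "j0 < n*l" "v j0 = 0"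
    and cover: "\<forall>i<n*k. \<forall>j<n*l. A i j \<le> u i + v j"
    and le_tdet: "(\<Sum>i<n*k. u i) + (\<Sum>j<n*l. v j) \<le> tdet (n*k) (n*l) A"
    by (blast dest: tdet_ge_normalized_cover[where A = A])
  have "m*k \<le> (\<Sum>i<n*k. u i)"
    unfolding cols[OF j0(1), symmetric] using cover j0 by (intro sum_mono) fastforce
  moreover have "n*k*(q+1) \<le> (\<Sum>i<n*k. u i) \<or> r*l \<le> (\<Sum>j<n*l. v j)"
  proof (cases "\<forall>i<n*k. q + 1 \<le> u i")
    case True
    then have "(\<Sum>i<n*k. q + 1) \<le> (\<Sum>i<n*k. u i)" by (intro sum_mono) auto
    then show ?thesis by simp
  next
    case False
    then obtain i0 where i0: "i0 < n*k" "u i0 \<le> q" by (auto simp: not_le)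
    have "n*l*q + r*l = m*l" using assms(5) by (simp add: algebra_simps)
    also have "\<dots> \<le> (\<Sum>j<n*l. u i0 + v j)"
      unfolding rows[OF i0(1), symmetric] using cover i0 by (intro sum_mono) auto
    also have "\<dots> \<le> n*l*q + (\<Sum>j<n*l. v j)" using i0(2) by (simp add: sum.distrib)
    finally show ?thesis by simp
  qed
  ultimately show ?thesis using le_tdet by linarith
qed

section \<open>Extremal matrices\<close>

lemma sum_div_blocks:
  fixes g :: "nat \<Rightarrow> nat"
  shows "(\<Sum>j<N*l. g (j div l)) = l * (\<Sum>h<N. g h)"
proof -
  have "(\<Sum>j<N*l. g (j div l)) = (\<Sum>h<N. \<Sum>j\<in>{h*l..<h*l+l}. g (j div l))"
    by (rule sum.nat_group[symmetric])
  also have "\<dots> = (\<Sum>h<N. l * g h)"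
  proof (rule sum.cong)
    fix h
    have "j div l = h" if "j \<in> {h*l..<h*l+l}" for j
      using that by (intro div_nat_eqI) (auto simp: algebra_simps)
    then show "(\<Sum>j\<in>{h*l..<h*l+l}. g (j div l)) = l * g h" by simp
  qed simp
  finally show ?thesis by (simp add: sum_distrib_left)
qed

lemma inj_on_shift_mod:
  fixes g N :: nat
  shows "inj_on (\<lambda>h. (g + h) mod N) {..<N}"
proof (rule inj_onI)
  have less: "a = b" if "a \<le> b" "b < N" "(g + a) mod N = (g + b) mod N" for a b
  proof -
    have "N dvd b - a" using that mod_eq_dvd_iff_nat[of "g + a" "g + b" N] by simp
    moreover have "b - a < N" using that by linarith
    ultimately show ?thesis using that(1) by (auto dest: dvd_imp_le)
  qed
  fix x y assume "x \<in> {..<N}" "y \<in> {..<N}" "(g + x) mod N = (g + y) mod N"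
  then show "x = y" using less[of x y] less[of y x] by (cases "x \<le> y") auto
qed

lemma count_shift_mod_less:
  fixes g N R :: nat
  assumes "R \<le> N"
  shows "(\<Sum>h<N. if (g + h) mod N < R then 1 else 0 :: nat) = R"
proof (cases "N = 0")
  case False
  have onto: "(\<lambda>h. (g + h) mod N) ` {..<N} = {..<N}"
    using False by (intro endo_inj_surj inj_on_shift_mod) auto
  have "(\<Sum>h<N. if (g + h) mod N < R then 1 else 0 :: nat) = (\<Sum>x<N. if x < R then 1 else 0)"
    using sum.reindex[OF inj_on_shift_mod, of "\<lambda>x. if x < R then 1 else 0 :: nat" g N]
    by (simp add: onto)
  also have "\<dots> = card ({..<N} \<inter> {x. x < R})" by (simp add: sum.If_cases)
  also have "{..<N} \<inter> {x. x < R} = {..<R}" using assms by auto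
  finally show ?thesis by simp
qed (use assms in simp)

lemma sum_if_less_split:
  assumes "a \<le> b"
  shows "(\<Sum>i<b. if i < a then f i else y) = (\<Sum>i<a. f i) + (b - a) * (y :: nat)"
proof -
  have "(\<Sum>i<b. if i < a then f i else y)
      = (\<Sum>i<a. if i < a then f i else y) + (\<Sum>i\<in>{a..<b}. if i < a then f i else y)"
    unfolding lessThan_atLeast0 using assms by (simp only: sum.atLeastLessThan_concat le0)
  also have "\<dots> = (\<Sum>i<a. f i) + (\<Sum>i\<in>{a..<b}. y)" by simp
  finally show ?thesis by simp
qed

definition circulant_blocks :: "nat \<Rightarrow> nat \<Rightarrow> nat \<Rightarrow> nat \<Rightarrow> nat \<Rightarrow> nat \<Rightarrow> nat" where
  "circulant_blocks k l N R i j = (if (i div k + j div l) mod N < R then 1 else 0)"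

lemma circulant_blocks_swap: "circulant_blocks k l N R i j = circulant_blocks l k N R j i"
  by (simp add: circulant_blocks_def add.commute)

lemma circulant_blocks_le_1: "circulant_blocks k l N R i j \<le> 1"
  by (simp add: circulant_blocks_def)

lemma circulant_blocks_0 [simp]: "circulant_blocks k l N 0 i j = 0"
  by (simp add: circulant_blocks_def)

lemma circulant_blocks_row_sum:
  assumes "R \<le> N"
  shows "(\<Sum>j<N*l. circulant_blocks k l N R i j) = R*l"
  using sum_div_blocks[where g = "\<lambda>h. if (i div k + h) mod N < R then 1 else 0" and N = N and l = l]
    count_shift_mod_less[OF assms]
  by (simp add: circulant_blocks_def)

lemma in_DklI:
  assumes "\<And>i j. n*k \<le> i \<or> n*l \<le> j \<Longrightarrow> A i j = 0"
    and "\<And>i. i < n*k \<Longrightarrow> (\<Sum>j<n*l. A i j) = m*l"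
    and "\<And>j. j < n*l \<Longrightarrow> (\<Sum>i<n*k. A i j) = m*k"
  shows "A \<in> Dkl k l m n"
  using assms by (auto simp: Dkl_def)

definition spread_matrix :: "nat \<Rightarrow> nat \<Rightarrow> nat \<Rightarrow> nat \<Rightarrow> nat \<Rightarrow> nat \<Rightarrow> nat \<Rightarrow> nat" where
  "spread_matrix k l n q r i j =
     (if i < n*k \<and> j < n*l then q + circulant_blocks k l n r i j else 0)"

lemma spread_matrix_swap: "spread_matrix k l n q r i j = spread_matrix l k n q r j i"
  by (auto simp: spread_matrix_def circulant_blocks_swap)

lemma spread_matrix_row_sum:
  assumes "r \<le> n" "i < n*k"
  shows "(\<Sum>j<n*l. spread_matrix k l n q r i j) = (q*n + r) * l"
proof -
  have "(\<Sum>j<n*l. spread_matrix k l n q r i j) = (\<Sum>j<n*l. q + circulant_blocks k l n r i j)"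
    using assms(2) by (simp add: spread_matrix_def)
  also have "\<dots> = n*l*q + r*l"
    by (simp add: sum.distrib circulant_blocks_row_sum[OF assms(1)])
  finally show ?thesis by (simp add: algebra_simps)
qed

lemma spread_matrix_in_Dkl:
  assumes "r \<le> n" "m = q*n + r"
  shows "spread_matrix k l n q r \<in> Dkl k l m n"
proof (rule in_DklI)
  show "(\<Sum>j<n*l. spread_matrix k l n q r i j) = m*l" if "i < n*k" for i
    using spread_matrix_row_sum[OF assms(1) that] assms(2) by simp
  show "(\<Sum>i<n*k. spread_matrix k l n q r i j) = m*k" if "j < n*l" for j
    using spread_matrix_row_sum[OF assms(1) that, of k q] assms(2)
    by (simp add: spread_matrix_swap[of k l n q r])
qed (auto simp: spread_matrix_def)

lemma tdet_spread_matrix: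
  assumes "k \<le> l"
  shows "tdet (n*k) (n*l) (spread_matrix k l n q r) \<le> n*k*(q+1)"
proof -
  have "tdet (n*k) (n*l) (spread_matrix k l n q r) \<le> (\<Sum>i<n*k. q + 1) + (\<Sum>j<n*l. 0)"
    using assms circulant_blocks_le_1
    by (intro tdet_le_cover_sum) (auto simp: spread_matrix_def add_mono)
  then show ?thesis by simp
qed

text \<open>The top left block has entries \<open>\<lfloor>c/r\<rfloor>\<close> and \<open>\<lceil>c/r\<rceil>\<close> summing to \<open>c\<close> in each
  block row and column, where \<open>c\<close> is dictated by the row sums:
  \<open>c + (n - r)(q + 1) = m\<close>.\<close>
definition corner_matrix :: "nat \<Rightarrow> nat \<Rightarrow> nat \<Rightarrow> nat \<Rightarrow> nat \<Rightarrow> nat \<Rightarrow> nat \<Rightarrow> nat \<Rightarrow> nat" where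
  "corner_matrix k l n q r c i j =
     (if i < n*k \<and> j < n*l then
        if i < r*k \<and> j < r*l then c div r + circulant_blocks k l r (c mod r) i j
        else if i < r*k \<or> j < r*l then q + 1 else q
      else 0)"

lemma corner_matrix_swap: "corner_matrix k l n q r c i j = corner_matrix l k n q r c j i"
  by (auto simp: corner_matrix_def circulant_blocks_swap)

lemma corner_matrix_row_sum:
  assumes "0 < r" "r \<le> n" "m = q*n + r" "c + (n - r)*(q + 1) = m" "i < n*k"
  shows "(\<Sum>j<n*l. corner_matrix k l n q r c i j) = m*l"
proof -
  obtain d where d: "n = r + d" using assms(2) le_Suc_ex by blast
  show ?thesis
  proof (cases "i < r*k")
    case True
    have "(\<Sum>j<n*l. corner_matrix k l n q r c i j)
        = (\<Sum>j<n*l. if j < r*l then c div r + circulant_blocks k l r (c mod r) i j else q + 1)"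
      using True assms(5) by (intro sum.cong) (auto simp: corner_matrix_def)
    also have "\<dots> = (\<Sum>j<r*l. c div r) + (\<Sum>j<r*l. circulant_blocks k l r (c mod r) i j)
        + (n*l - r*l)*(q + 1)"
      using assms(2) by (simp add: sum_if_less_split sum.distrib)
    also have "\<dots> = r*l*(c div r) + (c mod r)*l + (n*l - r*l)*(q + 1)"
      using circulant_blocks_row_sum[of "c mod r" r k l i] assms(1) by simp
    also have "\<dots> = (r*(c div r) + c mod r + d*(q + 1))*l"
    proof -
      have "r*l*a + b*l + (n*l - r*l)*(q + 1) = (r*a + b + d*(q + 1))*l" for a b :: nat
        by (simp add: d algebra_simps)
      then show ?thesis .
    qed
    also have "\<dots> = (c + (n - r)*(q + 1))*l" by (simp add: d)
    also have "\<dots> = m*l" using assms(4) by simp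
    finally show ?thesis .
  next
    case False
    have "(\<Sum>j<n*l. corner_matrix k l n q r c i j) = (\<Sum>j<n*l. if j < r*l then q + 1 else q)"
      using False assms(5) by (intro sum.cong) (auto simp: corner_matrix_def)
    also have "\<dots> = r*l*(q + 1) + (n*l - r*l)*q"
      using assms(2) by (simp add: sum_if_less_split)
    also have "\<dots> = m*l" using assms(3) d by (simp add: algebra_simps)
    finally show ?thesis .
  qed
qed

lemma corner_matrix_in_Dkl:
  assumes "0 < r" "r \<le> n" "m = q*n + r" "c + (n - r)*(q + 1) = m"
  shows "corner_matrix k l n q r c \<in> Dkl k l m n"
proof (rule in_DklI)
  show "(\<Sum>j<n*l. corner_matrix k l n q r c i j) = m*l" if "i < n*k" for i
    using corner_matrix_row_sum[OF assms that] .
  show "(\<Sum>i<n*k. corner_matrix k l n q r c i j) = m*k" if "j < n*l" for j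
    using corner_matrix_row_sum[OF assms that, of k] by (simp add: corner_matrix_swap[of k l n q r c])
qed (auto simp: corner_matrix_def)

lemma tdet_corner_matrix:
  assumes "k \<le> l" "0 < r" "r \<le> n" "c \<le> r*(q + 2)"
  shows "tdet (n*k) (n*l) (corner_matrix k l n q r c) \<le> n*k*q + r*(k + l)"
proof -
  have c: "r * (c div r) + c mod r = c" by (rule mult_div_mod_eq)
  have corner: "c div r + circulant_blocks k l r (c mod r) i j \<le> q + 2" for i j
  proof (cases "c mod r = 0")
    case True
    then have "r * (c div r) \<le> r * (q + 2)" using c assms(4) by simp
    then have "c div r \<le> q + 2" using mult_le_cancel1[of r "c div r" "q + 2"] assms(2) by blast
    then show ?thesis using True by simp
  next
    case False
    then have "r * (c div r) < r * (q + 2)" using c assms(4) by linarith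
    then have "c div r < q + 2" using mult_less_cancel1[of r "c div r" "q + 2"] by blast
    then show ?thesis using circulant_blocks_le_1[of k l r "c mod r" i j] by linarith
  qed
  define u where "u i = (if i < r*k then q + 1 else q)" for i
  define v where "v j = (if j < r*l then 1 else 0 :: nat)" for j
  have "tdet (n*k) (n*l) (corner_matrix k l n q r c) \<le> (\<Sum>i<n*k. u i) + (\<Sum>j<n*l. v j)"
    using assms(1) corner by (intro tdet_le_cover_sum) (auto simp: corner_matrix_def u_def v_def)
  also have "\<dots> = r*k*(q + 1) + (n*k - r*k)*q + r*l"
    using assms(3) by (simp add: u_def v_def sum_if_less_split)
  also have "\<dots> = n*k*q + r*(k + l)"
    using assms(3) by (simp add: algebra_simps diff_mult_distrib)
  finally show ?thesis .
qed

lemma finite_Dkl: "finite (Dkl k l m n)"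
proof -
  define rows where "rows = {f :: nat \<Rightarrow> nat. \<forall>j. (j \<in> {..<n*l} \<longrightarrow> f j \<in> {..m*l})
    \<and> (j \<notin> {..<n*l} \<longrightarrow> f j = 0)}"
  define mats where "mats = {A. \<forall>i. (i \<in> {..<n*k} \<longrightarrow> A i \<in> rows)
    \<and> (i \<notin> {..<n*k} \<longrightarrow> A i = (\<lambda>_. 0))}"
  have "A \<in> mats" if A: "A \<in> Dkl k l m n" for A
  proof -
    have "A i \<in> rows" if "i < n*k" for i
    proof -
      have "A i j \<le> (\<Sum>j<n*l. A i j)" if "j < n*l" for j
        using that by (intro member_le_sum) auto
      then show ?thesis using A \<open>i < n*k\<close> by (auto simp: Dkl_def rows_def)
    qed
    moreover have "A i = (\<lambda>_. 0)" if "\<not> i < n*k" for i using A that by (auto simp: Dkl_def)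
    ultimately show ?thesis unfolding mats_def by auto
  qed
  moreover have "finite rows" unfolding rows_def by (intro finite_set_of_finite_funs) auto
  then have "finite mats" unfolding mats_def by (intro finite_set_of_finite_funs) auto
  ultimately show ?thesis by (meson finite_subset subsetI)
qed

lemma Lkl_eqI:
  assumes "A0 \<in> Dkl k l m n" "tdet (n*k) (n*l) A0 \<le> X"
    and "\<And>A. A \<in> Dkl k l m n \<Longrightarrow> X \<le> tdet (n*k) (n*l) A"
  shows "Lkl k l m n = X"
proof -
  have fin: "finite (tdet (n*k) (n*l) ` Dkl k l m n)" using finite_Dkl by simp
  have "Lkl k l m n \<le> X"
    unfolding Lkl_def using Min_le[OF fin] assms(1,2) by (meson image_eqI order_trans)
  moreover have "X \<le> Lkl k l m n"
    unfolding Lkl_def using fin assms(1,3) by (subst Min_ge_iff) auto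
  ultimately show ?thesis by simp
qed

theorem corollary4p2:
  fixes k l m n q r :: nat
  assumes "0 < k" and "k \<le> l" and "gcd k l = 1"
    and "1 \<le> n"
    and "m = q*n + r" and "r < n"
    and "n \<le> r * (q + 2)"
  shows "Lkl k l m n = n*k*q + min (n*k) (r*(k+l))"
proof -
  have "0 < r" using assms(4,7) by (cases r) auto
  have lower: "n*k*q + min (n*k) (r*(k+l)) \<le> tdet (n*k) (n*l) A" if "A \<in> Dkl k l m n" for A
    using tdet_Dkl_lower_bound[OF that assms(2,1) _ assms(5)] assms(4,5)
    by (simp add: algebra_simps min_add_distrib_left)
  show ?thesis
  proof (cases "n*k \<le> r*(k+l)")
    case True
    have "spread_matrix k l n q r \<in> Dkl k l m n" using spread_matrix_in_Dkl assms(5,6) by simp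
    moreover have "tdet (n*k) (n*l) (spread_matrix k l n q r) \<le> n*k*q + min (n*k) (r*(k+l))"
      using tdet_spread_matrix[OF assms(2), of n q r] True by (simp add: algebra_simps)
    ultimately show ?thesis using lower by (rule Lkl_eqI)
  next
    case False
    define c where "c = m - (n - r)*(q + 1)"
    have "c + (n - r)*(q + 1) = m" "c \<le> r*(q + 2)"
      using assms(5-7) unfolding c_def by (auto simp: algebra_simps diff_mult_distrib)
    then have "corner_matrix k l n q r c \<in> Dkl k l m n"
      and "tdet (n*k) (n*l) (corner_matrix k l n q r c) \<le> n*k*q + min (n*k) (r*(k+l))"
      using corner_matrix_in_Dkl \<open>0 < r\<close> tdet_corner_matrix[OF assms(2) \<open>0 < r\<close>] False assms(5,6)
      by auto
    then show ?thesis using lower by (rule Lkl_eqI)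
  qed
qed

end
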